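(* In the setting below, suppose $X_0$ is almost surely constant, $\mathbb{P}(A_1\ne a_1)>0$, and for some $s\in\{1,\dots,t\}$ we have $\mathbb{P}(X_s(A_{1:s})=x_s)=0$ for all $x_s\in\mathcal{X}_s$. Then measurable $\underline g,\overline g:\mathcal{X}_{0:t}\to\mathbb{R}$ are permissible bounds only if they are trivial, i.e. only if $\underline g(X_{0:t}(a_{1:t}))\le\underline y(X_{0:t}(a_{1:t}))$ and $\overline g(X_{0:t}(a_{1:t}))\ge\overline y(X_{0:t}(a_{1:t}))$ almost surely.
   Context: Horizon $T\ge1$, $\mathcal{X}_t=\mathbb{R}^{d_t}$, finite action spaces $\mathcal{A}_t$; potential outcomes $X_0$, $X_r(a'_{1:r})\in\mathcal{X}_r$, random actions $A_{1:T}$ ($A_r\in\mathcal{A}_r$), and real-valued potential outcomes $Y(a'_{1:t})$, all defined jointly; $X_{0:t}(a_{1:t})=(X_0,X_1(a_1),\dots,X_t(a_{1:t}))$, and quantities evaluated at $A$ denote the potential outcome indexed by the realized actions. Fix $t\in\{1,\dots,T\}$, $a_{1:t}\in\mathcal{A}_{1:t}$, and measurable $\underline y,\overline y:\mathcal{X}_{0:t}\to\mathbb{R}$ with $\underline y(X_{0:t}(a_{1:t}))\le Y(a_{1:t})\le\overline y(X_{0:t}(a_{1:t}))$ almost surely. A pair $\underline g,\overline g:\mathcal{X}_{0:t}\to\mathbb{R}$ is permissible if, for every family of potential outcomes and actions $(\tilde X_{0:T}(a'_{1:T}),\tilde Y(a'_{1:t}),\tilde A_{1:T}:a'_{1:T}\in\mathcal{A}_{1:T})$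 with $\mathrm{Law}[\tilde X_{0:T}(\tilde A_{1:T}),\tilde A_{1:T},\tilde Y(\tilde A_{1:t})]=\mathrm{Law}[X_{0:T}(A_{1:T}),A_{1:T},Y(A_{1:t})]$ and $\underline y(\tilde X_{0:t}(a_{1:t}))\le\tilde Y(a_{1:t})\le\overline y(\tilde X_{0:t}(a_{1:t}))$ a.s., it holds that $\underline g(\tilde X_{0:t}(a_{1:t}))\le\mathbb{E}[\tilde Y(a_{1:t})\mid\tilde X_{0:t}(a_{1:t})]\le\overline g(\tilde X_{0:t}(a_{1:t}))$ almost surely. *)

theory Defs
  imports "HOL-Probability.Probability"
begin

text \<open>Outcome space X_r = R^(d r), rendered as extensional functions on the index set
  {..< d r} with the product Borel sigma-algebra.\<close>
definition XS :: "(nat \<Rightarrow> nat) \<Rightarrow> nat \<Rightarrow> (nat \<Rightarrow> real) measure" where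
  "XS d r = PiM {..<d r} (\<lambda>_. (borel :: real measure))"

definition HX :: "(nat \<Rightarrow> nat) \<Rightarrow> nat \<Rightarrow> (nat \<Rightarrow> nat \<Rightarrow> real) measure" where
  "HX d t = PiM {..t} (\<lambda>r. XS d r)"

definition AS :: "(nat \<Rightarrow> 'act set) \<Rightarrow> nat \<Rightarrow> (nat \<Rightarrow> 'act) measure" where
  "AS Act r = PiM {1..r} (\<lambda>k. count_space (Act k))"

definition acts :: "(nat \<Rightarrow> 'w \<Rightarrow> 'act) \<Rightarrow> nat \<Rightarrow> 'w \<Rightarrow> (nat \<Rightarrow> 'act)" where
  "acts A r \<omega> = restrict (\<lambda>k. A k \<omega>) {1..r}"

definition histfix :: "(nat \<Rightarrow> (nat \<Rightarrow> 'act) \<Rightarrow> 'w \<Rightarrow> (nat \<Rightarrow> real)) \<Rightarrow> (nat \<Rightarrow> 'act) \<Rightarrow> nat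
    \<Rightarrow> 'w \<Rightarrow> (nat \<Rightarrow> nat \<Rightarrow> real)" where
  "histfix X a t \<omega> = (\<lambda>r\<in>{..t}. X r (restrict a {1..r}) \<omega>)"

definition hist :: "(nat \<Rightarrow> (nat \<Rightarrow> 'act) \<Rightarrow> 'w \<Rightarrow> (nat \<Rightarrow> real)) \<Rightarrow> (nat \<Rightarrow> 'w \<Rightarrow> 'act) \<Rightarrow> nat
    \<Rightarrow> 'w \<Rightarrow> (nat \<Rightarrow> nat \<Rightarrow> real)" where
  "hist X A t \<omega> = (\<lambda>r\<in>{..t}. X r (acts A r \<omega>) \<omega>)"

definition obs :: "(nat \<Rightarrow> (nat \<Rightarrow> 'act) \<Rightarrow> 'w \<Rightarrow> (nat \<Rightarrow> real)) \<Rightarrow> (nat \<Rightarrow> 'w \<Rightarrow> 'act)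
    \<Rightarrow> ((nat \<Rightarrow> 'act) \<Rightarrow> 'w \<Rightarrow> real) \<Rightarrow> nat \<Rightarrow> nat
    \<Rightarrow> 'w \<Rightarrow> (nat \<Rightarrow> nat \<Rightarrow> real) \<times> (nat \<Rightarrow> 'act) \<times> real" where
  "obs X A Y T t \<omega> = (hist X A T \<omega>, acts A T \<omega>, Y (acts A t \<omega>) \<omega>)"

definition OS :: "(nat \<Rightarrow> nat) \<Rightarrow> (nat \<Rightarrow> 'act set) \<Rightarrow> nat
    \<Rightarrow> ((nat \<Rightarrow> nat \<Rightarrow> real) \<times> (nat \<Rightarrow> 'act) \<times> real) measure" where
  "OS d Act T = HX d T \<Otimes>\<^sub>M (AS Act T \<Otimes>\<^sub>M (borel :: real measure))"

definition PO_family :: "'w measure \<Rightarrow> (nat \<Rightarrow> nat) \<Rightarrow> (nat \<Rightarrow> 'act set) \<Rightarrow> nat \<Rightarrow> nat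
    \<Rightarrow> (nat \<Rightarrow> (nat \<Rightarrow> 'act) \<Rightarrow> 'w \<Rightarrow> (nat \<Rightarrow> real)) \<Rightarrow> (nat \<Rightarrow> 'w \<Rightarrow> 'act)
    \<Rightarrow> ((nat \<Rightarrow> 'act) \<Rightarrow> 'w \<Rightarrow> real) \<Rightarrow> bool" where
  "PO_family M d Act T t X A Y \<longleftrightarrow>
     prob_space M \<and>
     (\<forall>r\<le>T. \<forall>a\<in>(\<Pi>\<^sub>E k\<in>{1..r}. Act k). X r a \<in> measurable M (XS d r)) \<and>
     (\<forall>k\<in>{1..T}. A k \<in> measurable M (count_space (Act k))) \<and>
     (\<forall>a\<in>(\<Pi>\<^sub>E k\<in>{1..t}. Act k). Y a \<in> borel_measurable M)"

text \<open>The alternative families are quantified over all probability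
  spaces on the sample type 'w \<times> real.  E[Y~(a) | X~_{0:t}(a)] is
  real_cond_exp w.r.t. the sigma-algebra generated by X~_{0:t}(a_{1:t}).\<close>
definition permissible :: "'w measure \<Rightarrow> (nat \<Rightarrow> nat) \<Rightarrow> (nat \<Rightarrow> 'act set) \<Rightarrow> nat \<Rightarrow> nat
    \<Rightarrow> (nat \<Rightarrow> (nat \<Rightarrow> 'act) \<Rightarrow> 'w \<Rightarrow> (nat \<Rightarrow> real)) \<Rightarrow> (nat \<Rightarrow> 'w \<Rightarrow> 'act)
    \<Rightarrow> ((nat \<Rightarrow> 'act) \<Rightarrow> 'w \<Rightarrow> real) \<Rightarrow> (nat \<Rightarrow> 'act)
    \<Rightarrow> ((nat \<Rightarrow> nat \<Rightarrow> real) \<Rightarrow> real) \<Rightarrow> ((nat \<Rightarrow> nat \<Rightarrow> real) \<Rightarrow> real)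
    \<Rightarrow> ((nat \<Rightarrow> nat \<Rightarrow> real) \<Rightarrow> real) \<Rightarrow> ((nat \<Rightarrow> nat \<Rightarrow> real) \<Rightarrow> real) \<Rightarrow> bool" where
  "permissible M d Act T t X A Y a ylo yup glo gup \<longleftrightarrow>
     (\<forall>(M' :: ('w \<times> real) measure) X' A' Y'.
        PO_family M' d Act T t X' A' Y' \<and>
        distr M' (OS d Act T) (obs X' A' Y' T t) = distr M (OS d Act T) (obs X A Y T t) \<and>
        (AE \<omega> in M'. ylo (histfix X' a t \<omega>) \<le> Y' a \<omega> \<and> Y' a \<omega> \<le> yup (histfix X' a t \<omega>))
      \<longrightarrow>
        (AE \<omega> in M'.
           glo (histfix X' a t \<omega>)
             \<le> real_cond_exp M' (vimage_algebra (space M') (histfix X' a t) (HX d t)) (Y' a) \<omega> \<and>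
           real_cond_exp M' (vimage_algebra (space M') (histfix X' a t) (HX d t)) (Y' a) \<omega>
             \<le> gup (histfix X' a t \<omega>)))"

end

(* Only unobserved potential outcomes are perturbed. Fix a history x with x_0 = c and
   ylo x <= yup x. On the event A_1 ~= a_1, which has positive probability, set
   X_r(a_{1:r}) := x_r for 1 <= r <= t, and on A_{1:t} ~= a set Y(a) := ylo(X_{0:t}(a_{1:t}));
   the law of the observed data is unchanged. Now X_{0:t}(a_{1:t}) = x with positive
   probability, while {X_{0:t}(a_{1:t}) = x, A_{1:t} = a} is null because X_s(A_{1:s}) has
   no atoms. So Y(a) = ylo x almost surely on the atom {X_{0:t}(a_{1:t}) = x}, the
   conditional expectation equals ylo x there, and permissibility forces glo x <= ylo x.
   The same with yup gives gup x >= yup x, and almost every realised X_{0:t}(a_{1:t}) is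
   such an x. *)

theory Submission
  imports Defs
begin

lemma singleton_in_sets_PiM:
  assumes "finite I" "x \<in> space (PiM I N)" "\<And>i. i \<in> I \<Longrightarrow> {x i} \<in> sets (N i)"
  shows "{x} \<in> sets (PiM I N)"
proof -
  have "{x} = (\<Pi>\<^sub>E i\<in>I. {x i})"
    using assms(2) by (auto simp: space_PiM PiE_iff extensional_def fun_eq_iff) metis
  then show ?thesis
    using sets_PiM_I_finite[OF assms(1), of "\<lambda>i. {x i}" N] assms(3) by simp
qed

lemma singleton_in_sets_XS: "x \<in> space (XS d r) \<Longrightarrow> {x} \<in> sets (XS d r)"
  unfolding XS_def by (rule singleton_in_sets_PiM) auto

lemma singleton_in_sets_HX:
  assumes "x \<in> space (HX d t)"
  shows "{x} \<in> sets (HX d t)"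
  using assms unfolding HX_def
  by (intro singleton_in_sets_PiM singleton_in_sets_XS) (auto simp: space_PiM)

lemma emeasure_embed_measure_image_inj:
  assumes "inj f"
  shows "emeasure (embed_measure M f) (f ` B) = emeasure M B"
proof (cases "B \<in> sets M")
  case True
  then show ?thesis by (simp add: emeasure_embed_measure_image assms)
next
  case False
  have "f ` B \<notin> sets (embed_measure M f)"
  proof
    assume "f ` B \<in> sets (embed_measure M f)"
    then obtain C where "C \<in> sets M" "f ` B = f ` C"
      unfolding sets_embed_measure[OF assms] by auto
    then show False
      using False assms by (simp add: inj_image_eq_iff)
  qed
  then show ?thesis using False by (simp add: emeasure_notin_sets)
qed

lemma distr_embed_measure:
  assumes "inj f"
  shows "distr (embed_measure M f) N h = distr M N (\<lambda>x. h (f x))"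
  unfolding distr_def
proof (rule measure_of_eq)
  show "sets N \<subseteq> Pow (space N)" by (rule sets.space_closed)
  fix S
  have "h -` S \<inter> space (embed_measure M f) = f ` ((\<lambda>x. h (f x)) -` S \<inter> space M)"
    by (auto simp: space_embed_measure)
  then show "emeasure (embed_measure M f) (h -` S \<inter> space (embed_measure M f))
      = emeasure M ((\<lambda>x. h (f x)) -` S \<inter> space M)"
    by (simp add: emeasure_embed_measure_image_inj assms)
qed

lemma AE_obtain_in_nonnull_set:
  assumes "AE x in M. P x" "S \<in> sets M" "emeasure M S > 0"
  obtains x where "x \<in> S" "P x"
proof -
  obtain N where N: "{x \<in> space M. \<not> P x} \<subseteq> N" "emeasure M N = 0" "N \<in> sets M"
    using assms(1) by (rule AE_E)
  have "\<not> S \<subseteq> N"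
    using emeasure_mono[of S N M] N(2,3) assms(3) by auto
  then show ?thesis
    using that N(1) sets.sets_into_space[OF assms(2)] by auto
qed

lemma nn_cond_exp_on_atom:
  assumes N: "finite_measure N" and h: "h \<in> measurable N H" and x: "{x} \<in> sets H"
    and f: "f \<in> borel_measurable N"
    and pos: "emeasure N {\<omega>\<in>space N. h \<omega> = x} > 0"
    and f_const: "AE \<omega> in N. h \<omega> = x \<longrightarrow> f \<omega> = ennreal u"
    and w: "w \<in> space N" "h w = x"
  shows "nn_cond_exp N (vimage_algebra (space N) h H) f w = ennreal u"
proof -
  interpret finite_measure N by fact
  define F where "F = vimage_algebra (space N) h H"
  interpret finite_measure_subalgebra N F
    by unfold_locales (auto simp: subalgebra_def F_def sets_image_in_sets[OF refl h])
  define E where "E = h -` {x} \<inter> space N"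
  have E_F: "E \<in> sets F" unfolding E_def F_def by (rule in_vimage_algebra[OF x])
  then have E_N: "E \<in> sets N" using subalg by (auto simp: subalgebra_def)
  have E_pos: "emeasure N E > 0" using pos by (simp add: E_def vimage_def Int_def conj_commute)
  let ?g = "nn_cond_exp N F f"
  have g_const: "?g \<omega> = ?g w" if "\<omega> \<in> E" for \<omega>
  proof -
    have hF: "h \<in> space N \<rightarrow> space H" using h by (auto simp: measurable_def)
    have "?g -` {?g w} \<inter> space F \<in> sets F"
      using measurable_sets[OF borel_measurable_nn_cond_exp, of "{?g w}"] by simp
    then obtain B where B: "B \<in> sets H" "?g -` {?g w} \<inter> space N = h -` B \<inter> space N"
      unfolding F_def sets_vimage_algebra2[OF hF] by auto
    have "x \<in> B" using B(2) w by blast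
    then show ?thesis using B(2) that unfolding E_def by blast
  qed
  have "(\<integral>\<^sup>+ \<omega>. ?g w * indicator E \<omega> \<partial>N) = (\<integral>\<^sup>+ \<omega>. indicator E \<omega> * ?g \<omega> \<partial>N)"
    by (rule nn_integral_cong) (auto simp: indicator_def g_const)
  also have "\<dots> = (\<integral>\<^sup>+ \<omega>. indicator E \<omega> * f \<omega> \<partial>N)"
    by (rule nn_cond_exp_intg) (use E_F f in simp_all)
  also have "\<dots> = (\<integral>\<^sup>+ \<omega>. ennreal u * indicator E \<omega> \<partial>N)"
    by (rule nn_integral_cong_AE) (use f_const in \<open>auto simp: indicator_def E_def\<close>)
  finally have "?g w * emeasure N E = ennreal u * emeasure N E"
    using E_N by (simp add: nn_integral_cmult_indicator)
  then show ?thesis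
    using E_pos emeasure_finite[of E] unfolding F_def
    by (metis ennreal_mult_divide_eq order_less_irrefl top.not_eq_extremum)
qed

lemma real_cond_exp_on_atom:
  assumes "finite_measure N" "h \<in> measurable N H" "{x} \<in> sets H"
    and Z: "Z \<in> borel_measurable N"
    and "emeasure N {\<omega>\<in>space N. h \<omega> = x} > 0"
    and Z_const: "AE \<omega> in N. h \<omega> = x \<longrightarrow> Z \<omega> = v"
    and "w \<in> space N" "h w = x"
  shows "real_cond_exp N (vimage_algebra (space N) h H) Z w = v"
proof -
  have pos: "nn_cond_exp N (vimage_algebra (space N) h H) (\<lambda>\<omega>. ennreal (Z \<omega>)) w = ennreal v"
    by (rule nn_cond_exp_on_atom) (use assms in auto)
  have neg: "nn_cond_exp N (vimage_algebra (space N) h H) (\<lambda>\<omega>. ennreal (- Z \<omega>)) w = ennreal (- v)"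
    by (rule nn_cond_exp_on_atom) (use assms in auto)
  show ?thesis
    unfolding real_cond_exp_def pos neg by (cases "v \<ge> 0") (simp_all add: ennreal_neg)
qed

lemma bounds_on_real_cond_exp_at_atom:
  assumes N: "finite_measure N" and h: "h \<in> measurable N H" and x: "{x} \<in> sets H"
    and Z: "Z \<in> borel_measurable N"
    and pos: "emeasure N {\<omega>\<in>space N. h \<omega> = x} > 0"
    and Z_const: "AE \<omega> in N. h \<omega> = x \<longrightarrow> Z \<omega> = v"
    and bounds: "AE \<omega> in N. lo (h \<omega>) \<le> real_cond_exp N (vimage_algebra (space N) h H) Z \<omega>
                             \<and> real_cond_exp N (vimage_algebra (space N) h H) Z \<omega> \<le> up (h \<omega>)"
  shows "lo x \<le> v \<and> v \<le> up x"
proof -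
  have "{\<omega>\<in>space N. h \<omega> = x} \<in> sets N"
    using measurable_sets[OF h x] by (simp add: vimage_def Int_def conj_commute)
  then obtain w where w: "w \<in> space N" "h w = x"
    and "lo (h w) \<le> real_cond_exp N (vimage_algebra (space N) h H) Z w"
        "real_cond_exp N (vimage_algebra (space N) h H) Z w \<le> up (h w)"
    using AE_obtain_in_nonnull_set[OF bounds _ pos] by blast
  moreover have "real_cond_exp N (vimage_algebra (space N) h H) Z w = v"
    using real_cond_exp_on_atom[OF N h x Z pos Z_const w] .
  ultimately show ?thesis by simp
qed

lemma acts_restrict: "s \<le> t \<Longrightarrow> acts A s \<omega> = restrict (acts A t \<omega>) {1..s}"
  by (auto simp: acts_def fun_eq_iff)

lemma histfix_zero: "histfix X a t \<omega> 0 = X 0 (\<lambda>_. undefined) \<omega>"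
proof -
  have "restrict a {} = (\<lambda>_. undefined)" by (simp add: fun_eq_iff)
  then show ?thesis by (simp add: histfix_def)
qed

lemma histfix_measurable:
  assumes fam: "PO_family M d Act T t X A Y" and a: "a \<in> (\<Pi>\<^sub>E k\<in>{1..t}. Act k)" and "t \<le> T"
  shows "histfix X a t \<in> measurable M (HX d t)"
  unfolding histfix_def[abs_def] HX_def
proof (rule measurable_restrict)
  fix r assume "r \<in> {..t}"
  moreover have "restrict a {1..r} \<in> (\<Pi>\<^sub>E k\<in>{1..r}. Act k)" if "r \<le> t"
    using a that by (auto simp: PiE_iff)
  ultimately show "(\<lambda>\<omega>. X r (restrict a {1..r}) \<omega>) \<in> measurable M (XS d r)"
    using fam \<open>t \<le> T\<close> unfolding PO_family_def by simp
qed

lemma acts_measurable: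
  assumes fam: "PO_family M d Act T t X A Y" and fin: "\<forall>k. finite (Act k)" and "r \<le> T"
  shows "acts A r \<in> measurable M (count_space (\<Pi>\<^sub>E k\<in>{1..r}. Act k))"
proof -
  have "count_space (\<Pi>\<^sub>E k\<in>{1..r}. Act k) = AS Act r"
    unfolding AS_def using fin by (intro count_space_PiM_finite[symmetric]) (auto intro: countable_finite)
  moreover have "acts A r \<in> measurable M (AS Act r)"
    unfolding acts_def[abs_def] AS_def
    by (rule measurable_restrict) (use fam \<open>r \<le> T\<close> in \<open>auto simp: PO_family_def\<close>)
  ultimately show ?thesis by simp
qed

lemma observed_outcome_measurable:
  assumes fam: "PO_family M d Act T t X A Y" and fin: "\<forall>k. finite (Act k)" and "r \<le> T"
  shows "(\<lambda>\<omega>. X r (acts A r \<omega>) \<omega>) \<in> measurable M (XS d r)"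
proof (rule measurable_compose_countable'[where f="\<lambda>b \<omega>. X r b \<omega>"])
  show "acts A r \<in> measurable M (count_space (\<Pi>\<^sub>E k\<in>{1..r}. Act k))"
    using fam fin \<open>r \<le> T\<close> by (rule acts_measurable)
  show "countable (\<Pi>\<^sub>E k\<in>{1..r}. Act k)"
    using fin by (intro countable_finite finite_PiE) auto
qed (use fam \<open>r \<le> T\<close> in \<open>auto simp: PO_family_def\<close>)

lemma AE_observed_outcome_ne:
  assumes fam: "PO_family M d Act T t X A Y" and fin: "\<forall>k. finite (Act k)" and "r \<le> T"
    and y: "y \<in> space (XS d r)"
    and null: "measure M {\<omega> \<in> space M. X r (acts A r \<omega>) \<omega> = y} = 0"
  shows "AE \<omega> in M. X r (acts A r \<omega>) \<omega> \<noteq> y"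
proof -
  interpret prob_space M using fam by (simp add: PO_family_def)
  let ?S = "{\<omega> \<in> space M. X r (acts A r \<omega>) \<omega> = y}"
  have "?S \<in> sets M"
    using measurable_sets[OF observed_outcome_measurable[OF fam fin \<open>r \<le> T\<close>] singleton_in_sets_XS[OF y]]
    by (simp add: vimage_def Int_def conj_commute)
  then show ?thesis
    using null by (simp add: AE_iff_measurable[OF _ refl] emeasure_eq_measure)
qed

lemma PO_family_embed_measure:
  assumes fam: "PO_family M d Act T t X A Y" and inv: "\<And>\<omega>. g (f \<omega>) = \<omega>"
  shows "PO_family (embed_measure M f) d Act T t
           (\<lambda>r b p. X r b (g p)) (\<lambda>k p. A k (g p)) (\<lambda>b p. Y b (g p))"
proof -
  have inj: "inj f" using inv by (metis injI)
  interpret prob_space M using fam by (simp add: PO_family_def)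
  have "prob_space (embed_measure M f)"
    by (rule prob_spaceI)
       (simp add: space_embed_measure emeasure_embed_measure_image_inj[OF inj] emeasure_space_1)
  then show ?thesis
    using fam unfolding PO_family_def
    by (auto intro!: measurable_embed_measure1 simp: inv)
qed

text \<open>Permissibility quantifies only over sample spaces of type 'w \<times> real; a family on
  'w is transported there along the embedding w \<mapsto> (w, 0).\<close>
lemma permissible_bounds_at_atom:
  fixes M N :: "'w measure"
  assumes perm: "permissible M d Act T t X A Y a ylo yup glo gup"
    and fam: "PO_family N d Act T t X' A' Y'"
    and law: "distr N (OS d Act T) (obs X' A' Y' T t) = distr M (OS d Act T) (obs X A Y T t)"
    and bounds: "AE \<omega> in N. ylo (histfix X' a t \<omega>) \<le> Y' a \<omega> \<and> Y' a \<omega> \<le> yup (histfix X' a t \<omega>)"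
    and a: "a \<in> (\<Pi>\<^sub>E k\<in>{1..t}. Act k)" and "t \<le> T"
    and x: "x \<in> space (HX d t)"
    and pos: "emeasure N {\<omega>\<in>space N. histfix X' a t \<omega> = x} > 0"
    and atom: "AE \<omega> in N. histfix X' a t \<omega> = x \<longrightarrow> Y' a \<omega> = v"
  shows "glo x \<le> v \<and> v \<le> gup x"
proof -
  define f :: "'w \<Rightarrow> 'w \<times> real" where "f \<omega> = (\<omega>, 0)" for \<omega>
  have inj: "inj f" unfolding f_def by (rule injI) simp
  define N' where "N' = embed_measure N f"
  define X'' where "X'' r b (p :: 'w \<times> real) = X' r b (fst p)" for r b p
  define A'' where "A'' k (p :: 'w \<times> real) = A' k (fst p)" for k p
  define Y'' where "Y'' b (p :: 'w \<times> real) = Y' b (fst p)" for b p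
  define h where "h = histfix X'' a t"
  have fam': "PO_family N' d Act T t X'' A'' Y''"
    unfolding N'_def X''_def A''_def Y''_def by (rule PO_family_embed_measure[OF fam]) (simp add: f_def)
  have h_fst: "h p = histfix X' a t (fst p)" for p
    by (simp add: h_def histfix_def X''_def)
  have "obs X'' A'' Y'' T t = (\<lambda>p. obs X' A' Y' T t (fst p))"
    by (simp add: fun_eq_iff obs_def hist_def acts_def X''_def A''_def Y''_def)
  then have law': "distr N' (OS d Act T) (obs X'' A'' Y'' T t) = distr M (OS d Act T) (obs X A Y T t)"
    by (simp add: N'_def distr_embed_measure[OF inj] f_def law)
  have lift_AE: "(AE p in N'. P p) \<longleftrightarrow> (AE \<omega> in N. P (f \<omega>))" for P
    unfolding N'_def by (rule AE_embed_measure[OF inj])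
  have bounds': "AE p in N'. ylo (h p) \<le> Y'' a p \<and> Y'' a p \<le> yup (h p)"
    using bounds by (simp add: lift_AE h_fst Y''_def f_def)
  have CE_bounds: "AE p in N'. glo (h p) \<le> real_cond_exp N' (vimage_algebra (space N') h (HX d t)) (Y'' a) p
                            \<and> real_cond_exp N' (vimage_algebra (space N') h (HX d t)) (Y'' a) p \<le> gup (h p)"
    using perm fam' law' bounds' unfolding permissible_def h_def by blast
  have "{p\<in>space N'. h p = x} = f ` {\<omega>\<in>space N. histfix X' a t \<omega> = x}"
    by (auto simp: N'_def space_embed_measure h_fst f_def)
  then have pos': "emeasure N' {p\<in>space N'. h p = x} > 0"
    using pos by (simp add: N'_def emeasure_embed_measure_image_inj[OF inj])
  show ?thesis
  proof (rule bounds_on_real_cond_exp_at_atom[OF _ _ singleton_in_sets_HX[OF x] _ pos' _ CE_bounds])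
    show "finite_measure N'" using fam' by (simp add: PO_family_def prob_space_def)
    show "h \<in> measurable N' (HX d t)"
      unfolding h_def using fam' a \<open>t \<le> T\<close> by (rule histfix_measurable)
    show "Y'' a \<in> borel_measurable N'" using fam' a by (simp add: PO_family_def)
    show "AE p in N'. h p = x \<longrightarrow> Y'' a p = v"
      using atom by (simp add: lift_AE h_fst Y''_def f_def)
  qed
qed

text \<open>Both overrides change only potential outcomes that are never observed.\<close>
definition override_outcomes :: "(nat \<Rightarrow> (nat \<Rightarrow> 'act) \<Rightarrow> 'w \<Rightarrow> (nat \<Rightarrow> real))
    \<Rightarrow> (nat \<Rightarrow> 'w \<Rightarrow> 'act) \<Rightarrow> (nat \<Rightarrow> 'act) \<Rightarrow> nat \<Rightarrow> (nat \<Rightarrow> nat \<Rightarrow> real)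
    \<Rightarrow> nat \<Rightarrow> (nat \<Rightarrow> 'act) \<Rightarrow> 'w \<Rightarrow> (nat \<Rightarrow> real)" where
  "override_outcomes X A a t x r b \<omega> =
     (if 1 \<le> r \<and> r \<le> t \<and> b = restrict a {1..r} \<and> A 1 \<omega> \<noteq> a 1 then x r else X r b \<omega>)"

definition override_response :: "((nat \<Rightarrow> 'act) \<Rightarrow> 'w \<Rightarrow> real) \<Rightarrow> (nat \<Rightarrow> 'w \<Rightarrow> 'act)
    \<Rightarrow> (nat \<Rightarrow> 'act) \<Rightarrow> nat \<Rightarrow> ('w \<Rightarrow> real) \<Rightarrow> (nat \<Rightarrow> 'act) \<Rightarrow> 'w \<Rightarrow> real" where
  "override_response Y A a t g b \<omega> = (if b = a \<and> acts A t \<omega> \<noteq> a then g \<omega> else Y b \<omega>)"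

lemma override_outcomes_observed:
  "override_outcomes X A a t x r (acts A r \<omega>) \<omega> = X r (acts A r \<omega>) \<omega>"
proof -
  have "acts A r \<omega> 1 = A 1 \<omega>" "restrict a {1..r} 1 = a 1" if "1 \<le> r"
    using that by (simp_all add: acts_def)
  then show ?thesis
    unfolding override_outcomes_def by metis
qed

lemma override_response_observed:
  "override_response Y A a t g (acts A t \<omega>) \<omega> = Y (acts A t \<omega>) \<omega>"
  by (simp add: override_response_def)

lemma obs_override:
  "obs (override_outcomes X A a t x) A (override_response Y A a t g) T t = obs X A Y T t"
  by (rule ext) (simp add: obs_def hist_def override_outcomes_observed override_response_observed)

lemma histfix_override_outcomes_agree:
  "A 1 \<omega> = a 1 \<Longrightarrow> histfix (override_outcomes X A a t x) a t \<omega> = histfix X a t \<omega>"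
  by (simp add: histfix_def override_outcomes_def)

lemma histfix_override_outcomes_diverted:
  assumes "A 1 \<omega> \<noteq> a 1" and x: "x \<in> space (HX d t)" and "X 0 (\<lambda>_. undefined) \<omega> = x 0"
  shows "histfix (override_outcomes X A a t x) a t \<omega> = x"
proof -
  have "histfix (override_outcomes X A a t x) a t \<omega> r = x r" if "r \<le> t" for r
  proof (cases "r = 0")
    case True
    then show ?thesis
      using histfix_zero[of "override_outcomes X A a t x" a t \<omega>] assms(3)
      by (simp add: override_outcomes_def)
  next
    case False
    then show ?thesis
      using that assms(1) by (simp add: histfix_def override_outcomes_def)
  qed
  then have "histfix (override_outcomes X A a t x) a t \<omega> = restrict x {..t}"
    by (auto simp: histfix_def)
  also have "\<dots> = x"
    using x by (simp add: HX_def space_PiM PiE_iff extensional_restrict)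
  finally show ?thesis .
qed

lemma PO_family_override_outcomes:
  assumes fam: "PO_family M d Act T t X A Y" and x: "x \<in> space (HX d t)"
    and a: "a \<in> (\<Pi>\<^sub>E k\<in>{1..t}. Act k)" and t: "t \<in> {1..T}"
  shows "PO_family M d Act T t (override_outcomes X A a t x) A Y"
proof -
  let ?D = "{\<omega> \<in> space M. A 1 \<omega> \<noteq> a 1}"
  have A1: "A 1 \<in> measurable M (count_space (Act 1))"
    using fam t by (simp add: PO_family_def)
  have "?D = space M - A 1 -` {a 1} \<inter> space M" by auto
  moreover have "A 1 -` {a 1} \<inter> space M \<in> sets M"
    using measurable_sets[OF A1, of "{a 1}"] a t by (auto simp: PiE_iff)
  ultimately have D: "?D \<in> sets M" by auto
  have "override_outcomes X A a t x r b \<in> measurable M (XS d r)"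
    if r: "r \<le> T" "b \<in> (\<Pi>\<^sub>E k\<in>{1..r}. Act k)" for r b
  proof (cases "1 \<le> r \<and> r \<le> t \<and> b = restrict a {1..r}")
    case True
    have "x r \<in> space (XS d r)" using x True by (auto simp: HX_def space_PiM)
    then have "(\<lambda>\<omega>. if \<omega> \<in> ?D then x r else X r b \<omega>) \<in> measurable M (XS d r)"
      using fam r D by (intro measurable_If_set) (auto simp: PO_family_def)
    then show ?thesis
      by (rule measurable_cong[THEN iffD1, rotated]) (use True in \<open>simp add: override_outcomes_def\<close>)
  next
    case False
    then have "override_outcomes X A a t x r b = X r b"
      by (auto simp: override_outcomes_def[abs_def])
    then show ?thesis using fam r by (simp add: PO_family_def)
  qed
  then show ?thesis using fam by (simp add: PO_family_def)
qed

lemma PO_family_override_response: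
  assumes fam: "PO_family M d Act T t X A Y" and fin: "\<forall>k. finite (Act k)"
    and g: "g \<in> borel_measurable M" and a: "a \<in> (\<Pi>\<^sub>E k\<in>{1..t}. Act k)" and "t \<le> T"
  shows "PO_family M d Act T t X A (override_response Y A a t g)"
proof -
  let ?D = "acts A t -` {a} \<inter> space M"
  have D: "?D \<in> sets M"
    using measurable_sets[OF acts_measurable[OF fam fin \<open>t \<le> T\<close>], of "{a}"] a by simp
  have "override_response Y A a t g b \<in> borel_measurable M"
    if b: "b \<in> (\<Pi>\<^sub>E k\<in>{1..t}. Act k)" for b
  proof (cases "b = a")
    case True
    have "(\<lambda>\<omega>. if \<omega> \<in> ?D then Y a \<omega> else g \<omega>) \<in> borel_measurable M"
      using fam a g D by (intro measurable_If_set) (auto simp: PO_family_def)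
    then show ?thesis
      by (rule measurable_cong[THEN iffD1, rotated]) (use True in \<open>auto simp: override_response_def\<close>)
  next
    case False
    then have "override_response Y A a t g b = Y b"
      by (intro ext) (simp add: override_response_def)
    then show ?thesis using fam b by (simp add: PO_family_def)
  qed
  then show ?thesis using fam by (simp add: PO_family_def)
qed

lemma acts_neq_if_first_neq: "1 \<le> t \<Longrightarrow> A 1 \<omega> \<noteq> a 1 \<Longrightarrow> acts A t \<omega> \<noteq> a"
  by (auto simp: acts_def fun_eq_iff)

lemma emeasure_histfix_override_outcomes_pos:
  assumes fam: "PO_family M d Act T t X A Y" and a: "a \<in> (\<Pi>\<^sub>E k\<in>{1..t}. Act k)"
    and t: "t \<in> {1..T}" and x: "x \<in> space (HX d t)"
    and X0: "AE \<omega> in M. X 0 (\<lambda>_. undefined) \<omega> = x 0"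
    and A1: "measure M {\<omega> \<in> space M. A 1 \<omega> \<noteq> a 1} > 0"
  shows "emeasure M {\<omega> \<in> space M. histfix (override_outcomes X A a t x) a t \<omega> = x} > 0"
proof -
  interpret prob_space M using fam by (simp add: PO_family_def)
  have "histfix (override_outcomes X A a t x) a t \<in> measurable M (HX d t)"
    using PO_family_override_outcomes[OF fam x a t] a t by (intro histfix_measurable) auto
  from measurable_sets[OF this singleton_in_sets_HX[OF x]]
  have "{\<omega> \<in> space M. histfix (override_outcomes X A a t x) a t \<omega> = x} \<in> sets M"
    by (simp add: vimage_def Int_def conj_commute)
  moreover have "AE \<omega> in M. A 1 \<omega> \<noteq> a 1 \<longrightarrow> histfix (override_outcomes X A a t x) a t \<omega> = x"
    using X0 by eventually_elim (simp add: histfix_override_outcomes_diverted[OF _ x])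
  ultimately have "emeasure M {\<omega> \<in> space M. A 1 \<omega> \<noteq> a 1}
      \<le> emeasure M {\<omega> \<in> space M. histfix (override_outcomes X A a t x) a t \<omega> = x}"
    by (intro emeasure_mono_AE) auto
  with A1 show ?thesis
    by (simp add: emeasure_eq_measure)
qed

text \<open>On this atom, A_{1:t} = a would make the observed X_s(A_{1:s}) equal to x_s.\<close>
lemma AE_histfix_override_outcomes_atom_unobserved:
  assumes fam: "PO_family M d Act T t X A Y" and fin: "\<forall>k. finite (Act k)"
    and t: "t \<in> {1..T}" and s: "s \<in> {1..t}" and x: "x \<in> space (HX d t)"
    and no_atom: "\<forall>y. measure M {\<omega> \<in> space M. X s (acts A s \<omega>) \<omega> = y} = 0"
  shows "AE \<omega> in M. histfix (override_outcomes X A a t x) a t \<omega> = x \<longrightarrow> acts A t \<omega> \<noteq> a"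
proof -
  have "s \<le> t" "s \<le> T" using s t by auto
  have "x s \<in> space (XS d s)" using x \<open>s \<le> t\<close> by (auto simp: HX_def space_PiM)
  then have "AE \<omega> in M. X s (acts A s \<omega>) \<omega> \<noteq> x s"
    using fam fin \<open>s \<le> T\<close> no_atom by (intro AE_observed_outcome_ne) auto
  then show ?thesis
  proof eventually_elim
    case (elim \<omega>)
    show ?case
    proof (intro impI notI)
      assume hist: "histfix (override_outcomes X A a t x) a t \<omega> = x" and acts: "acts A t \<omega> = a"
      then have "A 1 \<omega> = a 1"
        using acts_neq_if_first_neq t by fastforce
      then have "histfix X a t \<omega> s = x s"
        using hist histfix_override_outcomes_agree by metis
      moreover have "acts A s \<omega> = restrict a {1..s}"
        using acts_restrict[OF \<open>s \<le> t\<close>, of A \<omega>] acts by simp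
      ultimately show False
        using elim \<open>s \<le> t\<close> by (simp add: histfix_def)
    qed
  qed
qed

lemma permissible_bound_at_point:
  assumes t: "t \<in> {1..T}" and fin: "\<forall>k. finite (Act k)"
    and fam: "PO_family M d Act T t X A Y"
    and a: "a \<in> (\<Pi>\<^sub>E k\<in>{1..t}. Act k)"
    and Y_bounds: "AE \<omega> in M. ylo (histfix X a t \<omega>) \<le> Y a \<omega> \<and> Y a \<omega> \<le> yup (histfix X a t \<omega>)"
    and X0: "AE \<omega> in M. X 0 (\<lambda>_. undefined) \<omega> = c"
    and A1: "measure M {\<omega> \<in> space M. A 1 \<omega> \<noteq> a 1} > 0"
    and s: "s \<in> {1..t}"
    and no_atom: "\<forall>y. measure M {\<omega> \<in> space M. X s (acts A s \<omega>) \<omega> = y} = 0"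
    and perm: "permissible M d Act T t X A Y a ylo yup glo gup"
    and sel: "sel \<in> borel_measurable (HX d t)"
    and sel_between: "\<And>z. ylo z \<le> yup z \<Longrightarrow> ylo z \<le> sel z \<and> sel z \<le> yup z"
    and x: "x \<in> space (HX d t)" and "x 0 = c" and "ylo x \<le> yup x"
  shows "glo x \<le> sel x \<and> sel x \<le> gup x"
proof -
  define X' where "X' = override_outcomes X A a t x"
  define h where "h = histfix X' a t"
  define Y' where "Y' = override_response Y A a t (\<lambda>\<omega>. sel (h \<omega>))"
  have "t \<le> T" using t by simp
  have fam_X': "PO_family M d Act T t X' A Y"
    unfolding X'_def using fam x a t by (rule PO_family_override_outcomes)
  have h_meas: "h \<in> measurable M (HX d t)"
    unfolding h_def using fam_X' a \<open>t \<le> T\<close> by (rule histfix_measurable)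
  have fam': "PO_family M d Act T t X' A Y'"
    unfolding Y'_def using fam_X' fin measurable_comp[OF h_meas sel] a \<open>t \<le> T\<close>
    by (intro PO_family_override_response) (simp_all add: comp_def)
  have law: "obs X' A Y' T t = obs X A Y T t"
    unfolding X'_def Y'_def by (rule obs_override)
  have h_agree: "h \<omega> = histfix X a t \<omega>" if "A 1 \<omega> = a 1" for \<omega>
    unfolding h_def X'_def using that by (rule histfix_override_outcomes_agree)
  have h_diverted: "h \<omega> = x" if "A 1 \<omega> \<noteq> a 1" "X 0 (\<lambda>_. undefined) \<omega> = c" for \<omega>
    unfolding h_def X'_def using that x \<open>x 0 = c\<close> by (intro histfix_override_outcomes_diverted) simp_all
  have bounds: "AE \<omega> in M. ylo (h \<omega>) \<le> Y' a \<omega> \<and> Y' a \<omega> \<le> yup (h \<omega>)"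
    using Y_bounds X0
  proof eventually_elim
    case (elim \<omega>)
    then show ?case
      using sel_between[of "h \<omega>"] h_agree h_diverted acts_neq_if_first_neq[of t A \<omega> a] t \<open>ylo x \<le> yup x\<close>
      by (cases "A 1 \<omega> = a 1") (auto simp: Y'_def override_response_def)
  qed
  have pos: "emeasure M {\<omega> \<in> space M. h \<omega> = x} > 0"
    unfolding h_def X'_def
    by (rule emeasure_histfix_override_outcomes_pos[OF fam a t x _ A1]) (use X0 \<open>x 0 = c\<close> in simp)
  have atom: "AE \<omega> in M. h \<omega> = x \<longrightarrow> Y' a \<omega> = sel x"
    using AE_histfix_override_outcomes_atom_unobserved[OF fam fin t s x no_atom, of a]
    by (auto simp: h_def X'_def Y'_def override_response_def)
  show ?thesis
    by (rule permissible_bounds_at_atom[OF perm fam' _ _ a \<open>t \<le> T\<close> x])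
       (use law bounds pos atom in \<open>simp_all add: h_def\<close>)
qed

theorem theorem4p7:
  fixes M :: "'w measure"
    and d :: "nat \<Rightarrow> nat"
    and Act :: "nat \<Rightarrow> 'act set"
    and T t :: nat
    and X :: "nat \<Rightarrow> (nat \<Rightarrow> 'act) \<Rightarrow> 'w \<Rightarrow> (nat \<Rightarrow> real)"
    and A :: "nat \<Rightarrow> 'w \<Rightarrow> 'act"
    and Y :: "(nat \<Rightarrow> 'act) \<Rightarrow> 'w \<Rightarrow> real"
    and a :: "nat \<Rightarrow> 'act"
    and ylo yup glo gup :: "(nat \<Rightarrow> nat \<Rightarrow> real) \<Rightarrow> real"
  assumes T: "1 \<le> T"
    and t: "t \<in> {1..T}"
    and Act_fin: "\<forall>k. finite (Act k)"
    and fam: "PO_family M d Act T t X A Y"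
    and a: "a \<in> (\<Pi>\<^sub>E k\<in>{1..t}. Act k)"
    and ylo_meas: "ylo \<in> borel_measurable (HX d t)"
    and yup_meas: "yup \<in> borel_measurable (HX d t)"
    and Ybounds: "AE \<omega> in M. ylo (histfix X a t \<omega>) \<le> Y a \<omega> \<and> Y a \<omega> \<le> yup (histfix X a t \<omega>)"
    and X0_const: "\<exists>c. AE \<omega> in M. X 0 (\<lambda>_. undefined) \<omega> = c"
    and A1: "measure M {\<omega> \<in> space M. A 1 \<omega> \<noteq> a 1} > 0"
    and no_atoms: "\<exists>s\<in>{1..t}. \<forall>x. measure M {\<omega> \<in> space M. X s (acts A s \<omega>) \<omega> = x} = 0"
    and glo_meas: "glo \<in> borel_measurable (HX d t)"
    and gup_meas: "gup \<in> borel_measurable (HX d t)"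
    and perm: "permissible M d Act T t X A Y a ylo yup glo gup"
  shows "AE \<omega> in M. glo (histfix X a t \<omega>) \<le> ylo (histfix X a t \<omega>)
                  \<and> gup (histfix X a t \<omega>) \<ge> yup (histfix X a t \<omega>)"
proof -
  obtain c where X0: "AE \<omega> in M. X 0 (\<lambda>_. undefined) \<omega> = c" using X0_const by blast
  obtain s where s: "s \<in> {1..t}"
    and no_atom: "\<forall>y. measure M {\<omega> \<in> space M. X s (acts A s \<omega>) \<omega> = y} = 0"
    using no_atoms by blast
  note bound_at = permissible_bound_at_point[OF t Act_fin fam a Ybounds X0 A1 s no_atom perm]
  have "histfix X a t \<in> measurable M (HX d t)"
    using fam a t by (intro histfix_measurable) auto
  then have "AE \<omega> in M. histfix X a t \<omega> \<in> space (HX d t)"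
    by (auto intro: measurable_space)
  then show ?thesis
    using Ybounds X0
  proof eventually_elim
    case (elim \<omega>)
    have "histfix X a t \<omega> 0 = c"
      using elim(3) by (simp add: histfix_zero)
    then show ?case
      using elim bound_at[OF ylo_meas, of "histfix X a t \<omega>"] bound_at[OF yup_meas, of "histfix X a t \<omega>"]
      by auto
  qed
qed

end
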